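(* For any circuit-level Pauli error corresponding to $e\in\mathcal P_{n(T+1)}$ in the spacetime code of a Clifford circuit, its syndrome bitstring $\vec s(e)$ with respect to the parity checks $\mathcal O^\perp$ of the measurement outcomes of the circuit equals $(\langle e,M(\vec u)\rangle)_{\vec u\in\mathcal O^\perp}$, the binary commutators with the measured spacetime stabilizer generators.
   Context: Pauli operators are taken without phases; $\langle A,B\rangle=0$ if $A,B$ commute and $1$ otherwise. A non-adaptive Clifford circuit on $n$ qubits has time steps $t=1,\dots,T$: at step $t$, Pauli measurements (if any) are performed at time slice $t-0.5$ and then a Clifford unitary $U_t$ is applied. For $t\le t'$ let $U_{t,t'}=U_{t'-1}\cdots U_t$ (identity if $t'=t$). The spacetime code has $n(T+1)$ qubits $(q,t-0.5)$, $t=1,\dots,T+1$; for $F\in\mathcal P_{n(T+1)}$, $F_{t-0.5}\in\mathcal P_n$ is its component at slice $t-0.5$, and $\kappa_{t-0.5}(O)$ places $O\in\mathcal P_n$ at slice $t-0.5$ with identity elsewhere. Cumulant and back-cumulant: $(\overrightarrow F)_{t-0.5}=\prod_{t'=1}^{t}U_{t',t}F_{t'-0.5}U_{t',t}^\dagger$ and $(\overleftarrow F)_{t-0.5}=\prod_{t'=t}^{T+1}U_{t,t'}^\dagger F_{t'-0.5}U_{t,t'}$. A circuit error inserting $e_t$ before step $t$ is the spacetime Pauli $e=\prod_t\kappa_{t-0.5}(e_t)$. The input is a codeword of a stabilizer code with generators $S^{(\mathrm{ini})}_1,\dots,S^{(\mathrm{ini})}_s$ (values recorded perfectly at the start), and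 the circuit measures $M^{(\mathrm{circ})}_1,\dots,M^{(\mathrm{circ})}_m$. Let $\vec E=(S^{(\mathrm{ini})}_1,\dots,S^{(\mathrm{ini})}_s,M^{(\mathrm{circ})}_1,\dots,M^{(\mathrm{circ})}_m)$, with $t_j$ the time step of measurement $E_j$ ($t_j=0$ for initial stabilizers), and $\vec o\in\mathbb Z_2^{s+m}$ the outcome vector. $\mathcal O^\perp$ is a set of parity checks $\vec u\in\mathbb Z_2^{s+m}$ with $\vec u\cdot\vec o=0$ deterministically in the noiseless circuit; the syndrome of a run is $(\vec u\cdot\vec o)_{\vec u\in\mathcal O^\perp}$, and $\vec s(e)$ is the syndrome produced when error $e$ occurs. Measured spacetime stabilizer generators: $M(\vec u)=\overleftarrow{\prod_{j=s+1}^{s+m}\kappa_{t_j-0.5}(E_j^{u_j})}$. Known fact (effect of faults): with error $e$ the outcome distribution becomes $\mathbb P^{(e)}(\vec o)=\mathbb P(\vec o+\vec f(e))$, where $\mathbb P$ is the noiseless distribution, $f(e)_j=0$ for $j\le s$, and $f(e)_{s+i}=\langle(\overrightarrow e)_{t_{s+i}-0.5},M^{(\mathrm{circ})}_i\rangle$. *)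

theory Defs
  imports Main
begin

text \<open>A single-qubit Pauli without phase is a pair (x,z) of bits:
  I = (False,False), X = (True,False), Z = (False,True), Y = (True,True).
  An n-qubit Pauli on the qubit set 'q (finite, |'q| = n) is a map 'q to such pairs.\<close>

type_synonym 'q pauli = "'q \<Rightarrow> bool \<times> bool"

definition pid :: "'q pauli" where
  "pid = (\<lambda>q. (False, False))"

definition pmult :: "'q pauli \<Rightarrow> 'q pauli \<Rightarrow> 'q pauli" where
  "pmult A B = (\<lambda>q. (fst (A q) \<noteq> fst (B q), snd (A q) \<noteq> snd (B q)))"

definition pprod_list :: "'q pauli list \<Rightarrow> 'q pauli" where
  "pprod_list Ps = foldr pmult Ps pid"

definition anti1 :: "bool \<times> bool \<Rightarrow> bool \<times> bool \<Rightarrow> bool" where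
  "anti1 a b = ((fst a \<and> snd b) \<noteq> (snd a \<and> fst b))"

text \<open>Binary commutator \<langle>A,B\<rangle> (True = 1 = anticommute) of n-qubit Paulis.\<close>
definition pcomm :: "'q::finite pauli \<Rightarrow> 'q pauli \<Rightarrow> bool" where
  "pcomm A B = odd (card {q. anti1 (A q) (B q)})"

text \<open>Phaseless action P \<mapsto> U P U^dagger of a Clifford unitary: exactly a bijective map
  preserving products and commutators (symplectic automorphism).\<close>
definition clifford_action :: "('q::finite pauli \<Rightarrow> 'q pauli) \<Rightarrow> bool" where
  "clifford_action C \<longleftrightarrow> bij C \<and> (\<forall>A B. C (pmult A B) = pmult (C A) (C B))
     \<and> (\<forall>A B. pcomm (C A) (C B) = pcomm A B)"

text \<open>U t is the conjugation action of the Clifford U_t applied at step t.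
  Ucomp U t t' is the action of U_{t,t'} = U_{t'-1} ... U_t (identity if t' \<le> t),
  i.e. P \<mapsto> U_{t,t'} P U_{t,t'}^dagger.\<close>
fun Ucomp :: "(nat \<Rightarrow> 'q pauli \<Rightarrow> 'q pauli) \<Rightarrow> nat \<Rightarrow> nat \<Rightarrow> 'q pauli \<Rightarrow> 'q pauli" where
  "Ucomp U t 0 = id"
| "Ucomp U t (Suc k) = (if Suc k \<le> t then id else U k \<circ> Ucomp U t k)"

text \<open>A spacetime Pauli F : nat \<Rightarrow> 'q pauli; F t is the component at time slice t - 0.5,
  for t = 1..T+1; components outside that range are the identity.\<close>
definition spacetime_pauli :: "nat \<Rightarrow> (nat \<Rightarrow> 'q pauli) \<Rightarrow> bool" where
  "spacetime_pauli T F \<longleftrightarrow> (\<forall>t. t \<notin> {1..T+1} \<longrightarrow> F t = pid)"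

definition stcomm :: "nat \<Rightarrow> (nat \<Rightarrow> 'q::finite pauli) \<Rightarrow> (nat \<Rightarrow> 'q pauli) \<Rightarrow> bool" where
  "stcomm T A B = odd (card {(q, t). t \<in> {1..T+1} \<and> anti1 (A t q) (B t q)})"

definition kappa :: "nat \<Rightarrow> 'q pauli \<Rightarrow> nat \<Rightarrow> 'q pauli" where
  "kappa t P = (\<lambda>t'. if t' = t then P else pid)"

text \<open>Cumulant: (F\<rightarrow>)_{t-0.5} = prod_{t'=1}^{t} U_{t',t} F_{t'-0.5} U_{t',t}^dagger.\<close>
definition cumulant :: "nat \<Rightarrow> (nat \<Rightarrow> 'q pauli \<Rightarrow> 'q pauli) \<Rightarrow> (nat \<Rightarrow> 'q pauli) \<Rightarrow> nat \<Rightarrow> 'q pauli" where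
  "cumulant T U F t = (if t \<in> {1..T+1}
      then pprod_list (map (\<lambda>t'. Ucomp U t' t (F t')) [1..<t+1]) else pid)"

text \<open>Back-cumulant: (F\<leftarrow>)_{t-0.5} = prod_{t'=t}^{T+1} U_{t,t'}^dagger F_{t'-0.5} U_{t,t'}.\<close>
definition back_cumulant :: "nat \<Rightarrow> (nat \<Rightarrow> 'q pauli \<Rightarrow> 'q pauli) \<Rightarrow> (nat \<Rightarrow> 'q pauli) \<Rightarrow> nat \<Rightarrow> 'q pauli" where
  "back_cumulant T U F t = (if t \<in> {1..T+1}
      then pprod_list (map (\<lambda>t'. inv (Ucomp U t t') (F t')) [t..<T+2]) else pid)"

text \<open>Measurements are indexed 0..s+m-1;
  indices < s are the initial stabilizers, index s+i (i < m) is the circuit measurement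
  Mc i performed at time step tm i (slice tm i - 0.5).\<close>
definition Mgen :: "nat \<Rightarrow> (nat \<Rightarrow> 'q pauli \<Rightarrow> 'q pauli) \<Rightarrow> nat \<Rightarrow> nat \<Rightarrow> (nat \<Rightarrow> 'q pauli)
     \<Rightarrow> (nat \<Rightarrow> nat) \<Rightarrow> (nat \<Rightarrow> bool) \<Rightarrow> nat \<Rightarrow> 'q pauli" where
  "Mgen T U s m Mc tm u = back_cumulant T U
     (\<lambda>t. pprod_list (map (\<lambda>i. kappa (tm i) (if u (s + i) then Mc i else pid) t) [0..<m]))"

text \<open>Flip vector f(e) of the measurement outcomes caused by the circuit error e
  (the known fact on the effect of faults): f(e)_j = 0 for j < s and
  f(e)_{s+i} = \<langle>(e\<rightarrow>)_{t_{s+i}-0.5}, Mc i\<rangle>.\<close>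
definition flip :: "nat \<Rightarrow> (nat \<Rightarrow> 'q::finite pauli \<Rightarrow> 'q pauli) \<Rightarrow> nat \<Rightarrow> (nat \<Rightarrow> 'q pauli)
     \<Rightarrow> (nat \<Rightarrow> nat) \<Rightarrow> (nat \<Rightarrow> 'q pauli) \<Rightarrow> nat \<Rightarrow> bool" where
  "flip T U s Mc tm e j = (if j < s then False
      else pcomm (cumulant T U e (tm (j - s))) (Mc (j - s)))"

text \<open>Syndrome bit of check u under error e: since u\<cdot>o = 0 in the noiseless circuit and
  the outcome distribution with error e is P(o + f(e)), the (deterministic) syndrome bit
  is u \<cdot> f(e) over Z_2.\<close>
definition syndrome :: "nat \<Rightarrow> (nat \<Rightarrow> 'q::finite pauli \<Rightarrow> 'q pauli) \<Rightarrow> nat \<Rightarrow> nat \<Rightarrow> (nat \<Rightarrow> 'q pauli)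
     \<Rightarrow> (nat \<Rightarrow> nat) \<Rightarrow> (nat \<Rightarrow> 'q pauli) \<Rightarrow> (nat \<Rightarrow> bool) \<Rightarrow> bool" where
  "syndrome T U s m Mc tm e u = odd (card {j. j < s + m \<and> u j \<and> flip T U s Mc tm e j})"

end

theory Submission
  imports Defs
begin

(* The syndrome bit of a check u is the parity of the outcome flips it sees,
   sum_i u_(s+i) <(e->)_(t_i), M_i>, i.e. the spacetime commutator <e->, F> with
   F = prod_i kappa_(t_i)(M_i^(u_(s+i))).  Commutators are bilinear and invariant under
   Clifford actions, so <U_(t,t') e_t, F_t'> = <e_t, U_(t,t')^dagger F_t' U_(t,t')>, and both
   <e->, F> and <e, F<-> expand to the parity of the same double sum of these terms over
   1 <= t <= t' <= T+1: cumulant and back-cumulant are adjoint.  Since F<- = M(u), done. *)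

lemma odd_sum_of_bool_odd:
  assumes "finite S"
  shows "odd (\<Sum>x\<in>S. of_bool (odd (f x)) :: nat) = odd (\<Sum>x\<in>S. f x :: nat)"
  using even_sum_iff[OF assms, of f] even_sum_iff[OF assms, of "\<lambda>x. of_bool (odd (f x))"]
  by (simp del: sum_of_bool_eq)

lemma odd_card_xor:
  assumes "finite S"
  shows "odd (card {x\<in>S. P x \<noteq> Q x}) = (odd (card {x\<in>S. P x}) \<noteq> odd (card {x\<in>S. Q x}))"
proof -
  have card_sum: "card {x\<in>S. R x} = (\<Sum>x\<in>S. of_bool (R x))" for R
    using assms by (simp add: Collect_conj_eq Int_commute)
  have "(\<Sum>x\<in>S. of_bool (P x \<noteq> Q x) :: nat)
      = (\<Sum>x\<in>S. of_bool (odd (of_bool (P x) + of_bool (Q x) :: nat)))"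
    by (rule sum.cong) auto
  then show ?thesis
    unfolding card_sum using odd_sum_of_bool_odd[OF assms, of "\<lambda>x. of_bool (P x) + of_bool (Q x)"]
    by (simp only: sum.distrib) simp
qed

lemma card_pairs_eq_sum:
  assumes "finite I" "\<And>t. finite {q. P q t}"
  shows "card {(q, t). t \<in> I \<and> P q t} = (\<Sum>t\<in>I. card {q. P q t})"
proof -
  have "{(q, t). t \<in> I \<and> P q t} = prod.swap ` Sigma I (\<lambda>t. {q. P q t})" by auto
  then show ?thesis using assms by (simp add: card_image)
qed

lemma sum_triangle_swap:
  fixes a b :: nat
  shows "(\<Sum>t\<in>{a..b}. \<Sum>t'\<in>{t..b}. f t t') = (\<Sum>t'\<in>{a..b}. \<Sum>t\<in>{a..t'}. f t t')"
proof -
  have "(\<Sum>t\<in>{a..b}. \<Sum>t'\<in>{t'\<in>{a..b}. t \<le> t'}. f t t')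
      = (\<Sum>t'\<in>{a..b}. \<Sum>t\<in>{t\<in>{a..b}. t \<le> t'}. f t t')"
    by (rule sum.swap_restrict) simp_all
  moreover have "t \<in> {a..b} \<Longrightarrow> {t'\<in>{a..b}. t \<le> t'} = {t..b}"
    and "t' \<in> {a..b} \<Longrightarrow> {t\<in>{a..b}. t \<le> t'} = {a..t'}" for t t' :: nat by auto
  ultimately show ?thesis by simp
qed

lemma anti1_commute: "anti1 a b = anti1 b a"
  unfolding anti1_def by auto

lemma pcomm_commute: "pcomm A B = pcomm B A"
  unfolding pcomm_def by (simp add: anti1_commute)

lemma pcomm_pid_right [simp]: "pcomm A pid = False"
  unfolding pcomm_def pid_def anti1_def by simp

lemma pcomm_pmult_right: "pcomm A (pmult B C) = (pcomm A B \<noteq> pcomm A C)"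
proof -
  have "anti1 (A q) (pmult B C q) = (anti1 (A q) (B q) \<noteq> anti1 (A q) (C q))" for q
    unfolding pmult_def anti1_def by auto
  then show ?thesis
    unfolding pcomm_def
    using odd_card_xor[of UNIV "\<lambda>q. anti1 (A q) (B q)" "\<lambda>q. anti1 (A q) (C q)"] by simp
qed

lemma pcomm_pprod_list_right:
  "pcomm A (pprod_list Ps) = odd (\<Sum>P\<leftarrow>Ps. of_bool (pcomm A P) :: nat)"
  by (induction Ps) (auto simp: pprod_list_def pcomm_pmult_right)

lemma pcomm_pprod_upt_right:
  "pcomm A (pprod_list (map f [a..<b])) = odd (\<Sum>t\<in>{a..<b}. of_bool (pcomm A (f t)) :: nat)"
  by (simp add: pcomm_pprod_list_right sum_list_distinct_conv_sum_set del: sum_of_bool_eq)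

lemma pcomm_kappa_right: "pcomm A (kappa t P t') = (t = t' \<and> pcomm A P)"
  by (simp add: kappa_def)

lemma clifford_action_id: "clifford_action (\<lambda>P. P)"
  unfolding clifford_action_def using bij_id by (simp add: id_def)

lemma clifford_action_comp:
  "clifford_action C \<Longrightarrow> clifford_action D \<Longrightarrow> clifford_action (C \<circ> D)"
  unfolding clifford_action_def by (simp add: bij_comp)

lemma pcomm_inv_clifford_action:
  assumes "clifford_action C"
  shows "pcomm A (inv C B) = pcomm (C A) B"
  using assms unfolding clifford_action_def by (metis bij_inv_eq_iff)

lemma clifford_action_Ucomp:
  assumes "\<And>t. t \<in> {1..T} \<Longrightarrow> clifford_action (U t)" "1 \<le> t" "k \<le> T + 1"
  shows "clifford_action (Ucomp U t k)"
  using assms(3)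
proof (induction k)
  case 0
  then show ?case by (simp add: id_def clifford_action_id)
next
  case (Suc k)
  then show ?case
    using assms(1,2) by (auto simp: id_def clifford_action_id clifford_action_comp)
qed

lemma stcomm_eq_sum: "stcomm T A B = odd (\<Sum>t\<in>{1..T+1}. of_bool (pcomm (A t) (B t)) :: nat)"
proof -
  have "card {(q, t). t \<in> {1..T+1} \<and> anti1 (A t q) (B t q)}
      = (\<Sum>t\<in>{1..T+1}. card {q. anti1 (A t q) (B t q)})"
    by (rule card_pairs_eq_sum) simp_all
  then show ?thesis
    unfolding stcomm_def pcomm_def
    using odd_sum_of_bool_odd[of "{1..T+1}" "\<lambda>t. card {q. anti1 (A t q) (B t q)}"] by simp
qed

lemma pcomm_cumulant:
  assumes "t \<in> {1..T+1}"
  shows "pcomm (cumulant T U e t) P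
    = odd (\<Sum>t'\<in>{1..t}. of_bool (pcomm (Ucomp U t' t (e t')) P) :: nat)"
proof -
  have "pcomm (cumulant T U e t) P
      = pcomm P (pprod_list (map (\<lambda>t'. Ucomp U t' t (e t')) [1..<Suc t]))"
    unfolding cumulant_def if_P[OF assms] by (simp only: pcomm_commute Suc_eq_plus1)
  then show ?thesis
    by (simp only: pcomm_pprod_upt_right atLeastLessThanSuc_atLeastAtMost pcomm_commute)
qed

lemma pcomm_back_cumulant:
  assumes cliff: "\<And>t. t \<in> {1..T} \<Longrightarrow> clifford_action (U t)" and t: "t \<in> {1..T+1}"
  shows "pcomm P (back_cumulant T U F t)
    = odd (\<Sum>t'\<in>{t..T+1}. of_bool (pcomm (Ucomp U t t' P) (F t')) :: nat)"
proof -
  have "pcomm P (back_cumulant T U F t)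
      = pcomm P (pprod_list (map (\<lambda>t'. inv (Ucomp U t t') (F t')) [t..<Suc (T+1)]))"
    unfolding back_cumulant_def if_P[OF t] by simp
  also have "\<dots> = odd (\<Sum>t'\<in>{t..T+1}. of_bool (pcomm P (inv (Ucomp U t t') (F t'))) :: nat)"
    by (simp only: pcomm_pprod_upt_right atLeastLessThanSuc_atLeastAtMost)
  also have "\<dots> = odd (\<Sum>t'\<in>{t..T+1}. of_bool (pcomm (Ucomp U t t' P) (F t')) :: nat)"
  proof (intro arg_cong[where f = odd] sum.cong refl)
    fix t' assume "t' \<in> {t..T+1}"
    with t have "clifford_action (Ucomp U t t')"
      by (intro clifford_action_Ucomp[OF cliff]) auto
    then show "of_bool (pcomm P (inv (Ucomp U t t') (F t')))
        = (of_bool (pcomm (Ucomp U t t' P) (F t')) :: nat)"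
      by (simp only: pcomm_inv_clifford_action)
  qed
  finally show ?thesis .
qed

lemma stcomm_back_cumulant:
  assumes cliff: "\<And>t. t \<in> {1..T} \<Longrightarrow> clifford_action (U t)"
  shows "stcomm T e (back_cumulant T U F) = stcomm T (cumulant T U e) F"
proof -
  let ?c = "\<lambda>t t'. of_bool (pcomm (Ucomp U t t' (e t)) (F t')) :: nat"
  have "stcomm T e (back_cumulant T U F)
      = odd (\<Sum>t\<in>{1..T+1}. of_bool (odd (\<Sum>t'\<in>{t..T+1}. ?c t t')) :: nat)"
    unfolding stcomm_eq_sum
    by (intro arg_cong[where f = odd] sum.cong refl) (simp only: pcomm_back_cumulant[OF cliff])
  also have "\<dots> = odd (\<Sum>t'\<in>{1..T+1}. \<Sum>t\<in>{1..t'}. ?c t t')"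
    by (simp only: odd_sum_of_bool_odd finite_atLeastAtMost sum_triangle_swap)
  also have "\<dots> = odd (\<Sum>t'\<in>{1..T+1}. of_bool (odd (\<Sum>t\<in>{1..t'}. ?c t t')) :: nat)"
    by (simp only: odd_sum_of_bool_odd finite_atLeastAtMost)
  also have "\<dots> = stcomm T (cumulant T U e) F"
    unfolding stcomm_eq_sum
    by (intro arg_cong[where f = odd] sum.cong refl) (simp only: pcomm_cumulant)
  finally show ?thesis .
qed

lemma sum_of_bool_delta:
  "finite I \<Longrightarrow> (\<Sum>t\<in>I. of_bool (a = t \<and> Q t) :: nat) = of_bool (a \<in> I \<and> Q a)"
  by (simp add: if_distrib[of of_bool] of_bool_conj del: sum_of_bool_eq)

lemma stcomm_kappa_pprod:
  assumes "\<And>i. i < m \<Longrightarrow> tm i \<in> {1..T+1}"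
  shows "stcomm T G (\<lambda>t. pprod_list (map (\<lambda>i. kappa (tm i) (P i) t) [0..<m]))
    = odd (\<Sum>i<m. of_bool (pcomm (G (tm i)) (P i)) :: nat)"
proof -
  let ?c = "\<lambda>i t. of_bool (tm i = t \<and> pcomm (G t) (P i)) :: nat"
  have "stcomm T G (\<lambda>t. pprod_list (map (\<lambda>i. kappa (tm i) (P i) t) [0..<m]))
      = odd (\<Sum>t\<in>{1..T+1}. of_bool (odd (\<Sum>i<m. ?c i t)) :: nat)"
    by (simp only: stcomm_eq_sum pcomm_pprod_upt_right pcomm_kappa_right atLeast0LessThan)
  also have "\<dots> = odd (\<Sum>i<m. \<Sum>t\<in>{1..T+1}. ?c i t)"
    by (simp only: odd_sum_of_bool_odd finite_atLeastAtMost sum.swap[of _ "{1..T+1}"])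
  also have "\<dots> = odd (\<Sum>i<m. of_bool (pcomm (G (tm i)) (P i)) :: nat)"
  proof (intro arg_cong[where f = odd] sum.cong refl)
    fix i assume "i \<in> {..<m}"
    then have "tm i \<in> {1..T+1}" using assms by simp
    then show "(\<Sum>t\<in>{1..T+1}. ?c i t) = of_bool (pcomm (G (tm i)) (P i))"
      by (simp only: sum_of_bool_delta finite_atLeastAtMost simp_thms)
  qed
  finally show ?thesis .
qed

lemma syndrome_eq_sum:
  "syndrome T U s m Mc tm e u
    = odd (\<Sum>i<m. of_bool (u (s + i) \<and> pcomm (cumulant T U e (tm i)) (Mc i)) :: nat)"
proof -
  let ?Q = "\<lambda>i. u (s + i) \<and> pcomm (cumulant T U e (tm i)) (Mc i)"
  have "{j. j < s + m \<and> u j \<and> flip T U s Mc tm e j} = (+) s ` {i. i < m \<and> ?Q i}"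
    by (auto simp: flip_def image_iff) (metis add_diff_inverse_nat add_less_cancel_left)
  then have "syndrome T U s m Mc tm e u = odd (card {i. i < m \<and> ?Q i})"
    unfolding syndrome_def by (simp add: card_image)
  also have "{i. i < m \<and> ?Q i} = {..<m} \<inter> {i. ?Q i}" by blast
  finally show ?thesis by simp
qed

theorem lemma14:
  fixes T s m :: nat
    and U :: "nat \<Rightarrow> 'q::finite pauli \<Rightarrow> 'q pauli"
    and Sini :: "nat \<Rightarrow> 'q pauli"
    and Mc :: "nat \<Rightarrow> 'q pauli"
    and tm :: "nat \<Rightarrow> nat"
    and Operp :: "(nat \<Rightarrow> bool) set"
    and e :: "nat \<Rightarrow> 'q pauli"
  assumes cliff: "\<And>t. t \<in> {1..T} \<Longrightarrow> clifford_action (U t)"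
    and tm_range: "\<And>i. i < m \<Longrightarrow> tm i \<in> {1..T}"
    and Operp_supp: "\<And>u j. u \<in> Operp \<Longrightarrow> s + m \<le> j \<Longrightarrow> \<not> u j"
    and e_st: "spacetime_pauli T e"
  shows "\<forall>u \<in> Operp. syndrome T U s m Mc tm e u = stcomm T e (Mgen T U s m Mc tm u)"
proof
  \<comment> \<open>Both sides only involve slices 1..T+1 and outcome indices below s+m, so the
     support conditions on e and on the checks are not needed.\<close>
  fix u
  let ?M = "\<lambda>i. if u (s + i) then Mc i else pid"
  have "syndrome T U s m Mc tm e u
      = odd (\<Sum>i<m. of_bool (u (s + i) \<and> pcomm (cumulant T U e (tm i)) (Mc i)) :: nat)"
    by (rule syndrome_eq_sum)
  also have "\<dots> = odd (\<Sum>i<m. of_bool (pcomm (cumulant T U e (tm i)) (?M i)) :: nat)"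
    by (intro arg_cong[where f = odd] sum.cong) auto
  also have "\<dots>
      = stcomm T (cumulant T U e) (\<lambda>t. pprod_list (map (\<lambda>i. kappa (tm i) (?M i) t) [0..<m]))"
    using tm_range by (intro stcomm_kappa_pprod[symmetric]) fastforce
  also have "\<dots> = stcomm T e (Mgen T U s m Mc tm u)"
    unfolding Mgen_def by (rule stcomm_back_cumulant[symmetric, OF cliff])
  finally show "syndrome T U s m Mc tm e u = stcomm T e (Mgen T U s m Mc tm u)" .
qed

end
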